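(* Let $G=(V,E)$ be a finite connected multigraph and let $F,F'$ be spanning 2-forests of $G$. Then the following are equivalent: (1) $F$ and $F'$ are not vertex equivalent; (2) there exists an edge $e\in E(F')$ such that the spanning subgraph with edge set $E(F)\cup\{e\}$ is a tree.
   Context: A spanning 2-forest of $G$ is a subgraph with vertex set $V$, without cycles, having exactly two connected components. For a spanning 2-forest $F$, $\mathcal{P}(F)=\{X,Y\}$ denotes the partition of $V$ into the vertex sets of the two connected components of $F$. Two spanning 2-forests $F,F'$ are vertex equivalent if $\mathcal{P}(F)=\mathcal{P}(F')$. *)

theory Defs
  imports Main
begin

text \<open>A finite multigraph (loops and parallel edges allowed) is given by a vertex
set V, an edge set E and an endpoint map ends; ends e = (u,v) means e joins u and v
(orientation irrelevant). Spanning subgraphs are identified with their edge sets.\<close>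

definition multigraph :: "'v set \<Rightarrow> 'e set \<Rightarrow> ('e \<Rightarrow> 'v \<times> 'v) \<Rightarrow> bool" where
  "multigraph V E ends \<longleftrightarrow> finite V \<and> finite E \<and>
     (\<forall>e\<in>E. fst (ends e) \<in> V \<and> snd (ends e) \<in> V)"

definition joins :: "('e \<Rightarrow> 'v \<times> 'v) \<Rightarrow> 'e \<Rightarrow> 'v \<Rightarrow> 'v \<Rightarrow> bool" where
  "joins ends e u v \<longleftrightarrow> ends e = (u, v) \<or> ends e = (v, u)"

definition adj_rel :: "('e \<Rightarrow> 'v \<times> 'v) \<Rightarrow> 'e set \<Rightarrow> ('v \<times> 'v) set" where
  "adj_rel ends F = {(u, v). \<exists>e\<in>F. joins ends e u v}"

definition conn :: "'v set \<Rightarrow> ('e \<Rightarrow> 'v \<times> 'v) \<Rightarrow> 'e set \<Rightarrow> ('v \<times> 'v) set" where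
  "conn V ends F = {(u, v). u \<in> V \<and> v \<in> V \<and> (u, v) \<in> (adj_rel ends F)\<^sup>*}"

definition components :: "'v set \<Rightarrow> ('e \<Rightarrow> 'v \<times> 'v) \<Rightarrow> 'e set \<Rightarrow> 'v set set" where
  "components V ends F = V // conn V ends F"

definition is_connected :: "'v set \<Rightarrow> ('e \<Rightarrow> 'v \<times> 'v) \<Rightarrow> 'e set \<Rightarrow> bool" where
  "is_connected V ends F \<longleftrightarrow> V \<noteq> {} \<and> (\<forall>u\<in>V. \<forall>v\<in>V. (u, v) \<in> conn V ends F)"

definition has_cycle :: "('e \<Rightarrow> 'v \<times> 'v) \<Rightarrow> 'e set \<Rightarrow> bool" where
  "has_cycle ends F \<longleftrightarrow> (\<exists>es vs. es \<noteq> [] \<and> length vs = Suc (length es) \<and>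
      distinct es \<and> set es \<subseteq> F \<and> hd vs = last vs \<and> distinct (butlast vs) \<and>
      (\<forall>i < length es. joins ends (es ! i) (vs ! i) (vs ! Suc i)))"

definition is_forest :: "('e \<Rightarrow> 'v \<times> 'v) \<Rightarrow> 'e set \<Rightarrow> bool" where
  "is_forest ends F \<longleftrightarrow> \<not> has_cycle ends F"

definition spanning_tree :: "'v set \<Rightarrow> 'e set \<Rightarrow> ('e \<Rightarrow> 'v \<times> 'v) \<Rightarrow> 'e set \<Rightarrow> bool" where
  "spanning_tree V E ends T \<longleftrightarrow> T \<subseteq> E \<and> is_forest ends T \<and> is_connected V ends T"

definition spanning_2forest :: "'v set \<Rightarrow> 'e set \<Rightarrow> ('e \<Rightarrow> 'v \<times> 'v) \<Rightarrow> 'e set \<Rightarrow> bool" where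
  "spanning_2forest V E ends F \<longleftrightarrow> F \<subseteq> E \<and> is_forest ends F \<and> card (components V ends F) = 2"

definition vertex_equivalent :: "'v set \<Rightarrow> ('e \<Rightarrow> 'v \<times> 'v) \<Rightarrow> 'e set \<Rightarrow> 'e set \<Rightarrow> bool" where
  "vertex_equivalent V ends F F' \<longleftrightarrow> components V ends F = components V ends F'"

end

theory Submission
  imports Defs
begin

text \<open>Both directions rest on one fact: adding a new edge to a forest keeps it a forest
exactly when the edge joins two different components. If F and F' are not vertex equivalent,
then some edge of F' must cross between the two components of F (otherwise every component
of F' lies inside one of F, and two partitions into two blocks, one refining the other,
coincide); adding it to F merges the two components into a spanning tree. Conversely, if
F \<union> {e} is a tree, then e joins the two components of F, whereas both endpoints of e lie in
one component of F'.\<close>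

definition walk :: "('e \<Rightarrow> 'v \<times> 'v) \<Rightarrow> 'e list \<Rightarrow> 'v list \<Rightarrow> bool" where
  "walk ends es vs \<longleftrightarrow> length vs = Suc (length es) \<and>
     (\<forall>i < length es. joins ends (es ! i) (vs ! i) (vs ! Suc i))"

lemma sym_adj_rel: "sym (adj_rel ends F)"
  by (auto simp: sym_def adj_rel_def joins_def)

lemma rtrancl_adj_rel_sym:
  "(x, y) \<in> (adj_rel ends F)\<^sup>* \<Longrightarrow> (y, x) \<in> (adj_rel ends F)\<^sup>*"
  by (rule symD[OF sym_rtrancl[OF sym_adj_rel]])

lemma adj_rel_mono: "F \<subseteq> G \<Longrightarrow> adj_rel ends F \<subseteq> adj_rel ends G"
  by (auto simp: adj_rel_def)

lemma endpoints_in_adj_rel: "e \<in> F \<Longrightarrow> (fst (ends e), snd (ends e)) \<in> adj_rel ends F"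
  by (auto simp: adj_rel_def joins_def)

lemma mem_conn_iff:
  "(u, v) \<in> conn V ends F \<longleftrightarrow> u \<in> V \<and> v \<in> V \<and> (u, v) \<in> (adj_rel ends F)\<^sup>*"
  by (simp add: conn_def)

lemma endpoints_in_conn:
  "e \<in> F \<Longrightarrow> fst (ends e) \<in> V \<Longrightarrow> snd (ends e) \<in> V \<Longrightarrow>
    (fst (ends e), snd (ends e)) \<in> conn V ends F"
  using mem_conn_iff[of "fst (ends e)" "snd (ends e)" V ends F] endpoints_in_adj_rel[of e F ends]
  by blast

lemma equiv_conn: "equiv V (conn V ends F)"
  unfolding equiv_def refl_on_def sym_def trans_def conn_def
  using rtrancl_adj_rel_sym by (auto intro: rtrancl_trans)

lemma conn_mono: "F \<subseteq> G \<Longrightarrow> conn V ends F \<subseteq> conn V ends G"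
  unfolding conn_def using rtrancl_mono[OF adj_rel_mono] by blast

lemma conn_subset_if_endpoints_conn:
  assumes "\<forall>e\<in>F'. (fst (ends e), snd (ends e)) \<in> conn V ends F"
  shows "conn V ends F' \<subseteq> conn V ends F"
proof -
  have "adj_rel ends F' \<subseteq> (adj_rel ends F)\<^sup>*"
    using assms rtrancl_adj_rel_sym by (fastforce simp: adj_rel_def joins_def conn_def)
  then have "(adj_rel ends F')\<^sup>* \<subseteq> (adj_rel ends F)\<^sup>*"
    using rtrancl_subset_rtrancl by blast
  then show ?thesis
    unfolding conn_def by blast
qed

lemma walk_segment_rtrancl_adj_rel:
  assumes "walk ends es vs" "j \<le> l" "l \<le> length es"
    and "\<forall>k. j \<le> k \<and> k < l \<longrightarrow> es ! k \<in> F"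
  shows "(vs ! j, vs ! l) \<in> (adj_rel ends F)\<^sup>*"
  using assms(2-4)
proof (induction l)
  case 0
  then show ?case by simp
next
  case (Suc l)
  show ?case
  proof (cases "j = Suc l")
    case False
    then have "(vs ! j, vs ! l) \<in> (adj_rel ends F)\<^sup>*"
      using Suc by simp
    moreover have "(vs ! l, vs ! Suc l) \<in> adj_rel ends F"
    proof -
      have "l < length es" "es ! l \<in> F"
        using Suc.prems False by auto
      then show ?thesis
        using assms(1) unfolding walk_def adj_rel_def by blast
    qed
    ultimately show ?thesis
      by (rule rtrancl_into_rtrancl)
  qed simp
qed

lemma rtrancl_adj_rel_imp_path:
  assumes "(u, v) \<in> (adj_rel ends F)\<^sup>*"
  obtains es vs where "walk ends es vs" "distinct vs" "distinct es" "set es \<subseteq> F"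
    "hd vs = u" "last vs = v"
  using assms
proof (induction arbitrary: thesis rule: converse_rtrancl_induct)
  case base
  show ?case
    by (rule base[of "[]" "[v]"]) (simp_all add: walk_def)
next
  case (step y z)
  obtain f where f: "f \<in> F" "joins ends f y z"
    using step(1) unfolding adj_rel_def by auto
  obtain es vs where P: "walk ends es vs" "distinct vs" "distinct es" "set es \<subseteq> F"
    "hd vs = z" "last vs = v"
    using step.IH by blast
  have vs_nonempty: "vs \<noteq> []"
    using P(1) by (auto simp: walk_def)
  show ?case
  proof (cases "y \<in> set vs")
    case True
    \<comment> \<open>shortcut the path at its visit to y\<close>
    then obtain k where k: "k < length vs" "vs ! k = y"
      by (auto simp: in_set_conv_nth)
    show ?thesis
    proof (rule step.prems[of "drop k es" "drop k vs"])
      show "walk ends (drop k es) (drop k vs)"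
        using P(1) k by (auto simp: walk_def add.commute)
      show "set (drop k es) \<subseteq> F"
        using P(4) by (meson set_drop_subset subset_trans)
    qed (use P k in \<open>simp_all add: hd_drop_conv_nth\<close>)
  next
    case False
    have "f \<notin> set es"
    proof
      assume "f \<in> set es"
      then obtain i where "i < length es" "es ! i = f"
        by (auto simp: in_set_conv_nth)
      with P(1) f(2) have "y = vs ! i \<or> y = vs ! Suc i" "vs ! i \<in> set vs" "vs ! Suc i \<in> set vs"
        by (auto simp: walk_def joins_def)
      with False show False by auto
    qed
    moreover have "vs ! 0 = z"
      using P(5) vs_nonempty by (simp add: hd_conv_nth)
    ultimately show ?thesis
      using P f False vs_nonempty
      by (intro step.prems[of "f # es" "y # vs"]) (auto simp: walk_def nth_Cons split: nat.split)
  qed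
qed

lemma has_cycle_insert_if_rtrancl_adj_rel:
  assumes "e \<notin> F" and "(snd (ends e), fst (ends e)) \<in> (adj_rel ends F)\<^sup>*"
  shows "has_cycle ends (insert e F)"
proof -
  obtain es vs where P: "walk ends es vs" "distinct vs" "distinct es" "set es \<subseteq> F"
    "hd vs = snd (ends e)" "last vs = fst (ends e)"
    using rtrancl_adj_rel_imp_path[OF assms(2)] by blast
  have "vs \<noteq> []"
    using P(1) by (auto simp: walk_def)
  then have "vs ! length es = fst (ends e)"
    using P(1,6) by (auto simp: walk_def last_conv_nth)
  then have "walk ends (es @ [e]) (vs @ [snd (ends e)])"
    using P(1) by (auto simp: walk_def nth_append joins_def less_Suc_eq)
  then show ?thesis
    unfolding has_cycle_def walk_def
    using P \<open>vs \<noteq> []\<close> assms(1) by (intro exI[of _ "es @ [e]"] exI) (auto simp: hd_append)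
qed

lemma rtrancl_adj_rel_if_has_cycle_insert:
  assumes "has_cycle ends (insert e F)" and "\<not> has_cycle ends F"
  shows "(fst (ends e), snd (ends e)) \<in> (adj_rel ends F)\<^sup>*"
proof -
  obtain es vs where C: "es \<noteq> []" "length vs = Suc (length es)" "distinct es"
    "set es \<subseteq> insert e F" "hd vs = last vs" "distinct (butlast vs)"
    "\<forall>i < length es. joins ends (es ! i) (vs ! i) (vs ! Suc i)"
    using assms(1) unfolding has_cycle_def by blast
  then have walk: "walk ends es vs"
    by (simp add: walk_def)
  have "e \<in> set es"
  proof (rule ccontr)
    assume "e \<notin> set es"
    then have "set es \<subseteq> F"
      using C(4) by auto
    then have "has_cycle ends F"
      using C unfolding has_cycle_def by blast
    with assms(2) show False ..
  qed
  then obtain i where i: "i < length es" "es ! i = e"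
    by (auto simp: in_set_conv_nth)
  have in_F: "es ! k \<in> F" if "k < length es" "k \<noteq> i" for k
    using C(3,4) i that by (metis insertE nth_eq_iff_index_eq nth_mem subsetD)
  \<comment> \<open>the rest of the cycle, from vs ! Suc i round to vs ! i, avoids e\<close>
  have "(vs ! Suc i, vs ! length es) \<in> (adj_rel ends F)\<^sup>*"
    and "(vs ! 0, vs ! i) \<in> (adj_rel ends F)\<^sup>*"
    by (rule walk_segment_rtrancl_adj_rel[OF walk]; use i in_F in auto)+
  moreover have "vs ! 0 = vs ! length es"
    using C(2,5) by (metis diff_Suc_1 hd_conv_nth last_conv_nth list.size(3) nat.distinct(1))
  ultimately have "(vs ! Suc i, vs ! i) \<in> (adj_rel ends F)\<^sup>*"
    by simp
  moreover have "joins ends e (vs ! i) (vs ! Suc i)"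
    using C(7) i by auto
  ultimately show ?thesis
    unfolding joins_def using rtrancl_adj_rel_sym by (metis fst_conv snd_conv)
qed

lemma is_forest_insert_iff:
  assumes "is_forest ends F" and "e \<notin> F"
  shows "is_forest ends (insert e F) \<longleftrightarrow> (fst (ends e), snd (ends e)) \<notin> (adj_rel ends F)\<^sup>*"
  using assms rtrancl_adj_rel_if_has_cycle_insert has_cycle_insert_if_rtrancl_adj_rel
    rtrancl_adj_rel_sym unfolding is_forest_def by metis

lemma equiv_eq_if_quotient_eq:
  assumes "equiv A R" "equiv A S" "A // R = A // S"
  shows "R = S"
proof -
  have "R \<subseteq> S" if "equiv A R" "equiv A S" "A // R = A // S" for R S
  proof
    fix p assume "p \<in> R"
    then obtain x y where p: "p = (x, y)" "x \<in> A" "y \<in> A" "(x, y) \<in> R"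
      using equiv_type[OF \<open>equiv A R\<close>] by auto
    have "R `` {x} \<in> A // S" and "{x, y} \<subseteq> R `` {x}"
      using that p by (auto intro: quotientI simp: equiv_class_eq_iff)
    then show "p \<in> S"
      using in_quotient_imp_in_rel[OF \<open>equiv A S\<close>] p(1) by blast
  qed
  then show ?thesis
    using assms by blast
qed

lemma equiv_eq_if_subset_card_quotient_eq:
  assumes "equiv A R" "equiv A S" "R \<subseteq> S" "finite (A // R)"
    and "card (A // S) = card (A // R)"
  shows "R = S"
proof
  show "S \<subseteq> R"
  proof
    fix p assume "p \<in> S"
    then obtain x y where p: "p = (x, y)" "x \<in> A" "y \<in> A" "(x, y) \<in> S"
      using equiv_type[OF \<open>equiv A S\<close>] by auto
    \<comment> \<open>S-classes of R-classes: a surjection of A//R onto A//S, hence a bijection\<close>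
    have "inj_on (\<lambda>X. S `` X) (A // R)"
      using assms by (intro eq_card_imp_inj_on) (simp_all add: refines_equiv_image_eq)
    moreover have "S `` (R `` {x}) = S `` (R `` {y})"
      using assms p by (simp add: refines_equiv_class_eq2 equiv_class_eq)
    ultimately have "R `` {x} = R `` {y}"
      using p by (auto dest: inj_onD intro: quotientI)
    then show "p \<in> R"
      using assms(1) p by (simp add: eq_equiv_class_iff)
  qed
qed (use assms in simp)

lemma components_eq_iff_conn_eq:
  "components V ends F = components V ends F' \<longleftrightarrow> conn V ends F = conn V ends F'"
  unfolding components_def using equiv_eq_if_quotient_eq[OF equiv_conn equiv_conn] by metis

lemma components_if_is_connected:
  assumes "is_connected V ends F"
  shows "components V ends F = {V}"
  using assms unfolding is_connected_def components_def quotient_def conn_def by auto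

lemma quotient_eq_doubleton_if_card_2:
  assumes "equiv A R" "card (A // R) = 2" "x \<in> A" "y \<in> A" "(x, y) \<notin> R"
  shows "A // R = {R `` {x}, R `` {y}}"
proof -
  have "R `` {x} \<noteq> R `` {y}"
    using assms(5) eq_equiv_class_iff[OF assms(1,3,4)] by blast
  then have "card {R `` {x}, R `` {y}} = card (A // R)"
    using assms(2) by simp
  moreover have "{R `` {x}, R `` {y}} \<subseteq> A // R"
    using assms(3,4) by (simp add: quotientI)
  moreover have "finite (A // R)"
    using assms(2) by (simp add: card_ge_0_finite)
  ultimately show ?thesis
    by (metis card_subset_eq)
qed

lemma equiv_eq_Times_if_merges_two_classes:
  assumes "equiv A R" "equiv A S" "R \<subseteq> S" "card (A // R) = 2"
    and "x \<in> A" "y \<in> A" "(x, y) \<notin> R" "(x, y) \<in> S"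
  shows "S = A \<times> A"
proof -
  have same_class: "S `` {z} = S `` {x}" if "z \<in> A" for z
  proof -
    have "R `` {z} = R `` {x} \<or> R `` {z} = R `` {y}"
      using quotientI[of z A R, OF that]
      unfolding quotient_eq_doubleton_if_card_2[OF assms(1,4-7)] by simp
    then have "(z, x) \<in> S \<or> (z, y) \<in> S"
      using eq_equiv_class_iff[OF assms(1) that] assms(3,5,6) by blast
    then show ?thesis
    proof
      assume "(z, y) \<in> S"
      then have "S `` {z} = S `` {y}"
        by (rule equiv_class_eq[OF assms(2)])
      also have "\<dots> = S `` {x}"
        using assms(8) by (rule equiv_class_eq[OF assms(2), symmetric])
      finally show ?thesis .
    qed (rule equiv_class_eq[OF assms(2)])
  qed
  have "(z, w) \<in> S" if "z \<in> A" "w \<in> A" for z w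
    using eq_equiv_class_iff[OF assms(2) that] same_class[OF \<open>z \<in> A\<close>] same_class[OF \<open>w \<in> A\<close>]
    by (metis (no_types))
  then show ?thesis
    using equiv_type[OF assms(2)] by blast
qed

lemma is_connected_insert_if_two_components:
  assumes "card (components V ends F) = 2"
    and "fst (ends e) \<in> V" "snd (ends e) \<in> V"
    and "(fst (ends e), snd (ends e)) \<notin> conn V ends F"
  shows "is_connected V ends (insert e F)"
proof -
  have "conn V ends F \<subseteq> conn V ends (insert e F)"
    by (rule conn_mono) auto
  moreover have "card (V // conn V ends F) = 2"
    using assms(1) unfolding components_def .
  moreover have "(fst (ends e), snd (ends e)) \<in> conn V ends (insert e F)"
    using endpoints_in_conn[of e "insert e F" ends V, OF insertI1 assms(2,3)] .
  ultimately have "conn V ends (insert e F) = V \<times> V"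
    using equiv_eq_Times_if_merges_two_classes[OF equiv_conn equiv_conn _ _ assms(2,3,4)] by blast
  then show ?thesis
    using assms(2) unfolding is_connected_def by blast
qed

lemma spanning_tree_insert_iff:
  assumes "spanning_2forest V E ends F" and "e \<in> E"
    and "fst (ends e) \<in> V" "snd (ends e) \<in> V"
  shows "spanning_tree V E ends (insert e F) \<longleftrightarrow>
    (fst (ends e), snd (ends e)) \<notin> conn V ends F"
proof -
  have F: "F \<subseteq> E" "is_forest ends F" "card (components V ends F) = 2"
    using assms(1) by (auto simp: spanning_2forest_def)
  have conn_iff_rtrancl: "(fst (ends e), snd (ends e)) \<in> conn V ends F \<longleftrightarrow>
      (fst (ends e), snd (ends e)) \<in> (adj_rel ends F)\<^sup>*"
    using assms(3,4) mem_conn_iff[of "fst (ends e)" "snd (ends e)" V ends F] by blast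
  show ?thesis
  proof
    assume tree: "spanning_tree V E ends (insert e F)"
    have "e \<notin> F"
    proof
      assume "e \<in> F"
      then have "is_connected V ends F"
        using tree by (simp add: spanning_tree_def insert_absorb)
      with F(3) show False
        by (simp add: components_if_is_connected)
    qed
    then show "(fst (ends e), snd (ends e)) \<notin> conn V ends F"
      using tree is_forest_insert_iff[OF F(2)] conn_iff_rtrancl unfolding spanning_tree_def by blast
  next
    assume across: "(fst (ends e), snd (ends e)) \<notin> conn V ends F"
    then have "e \<notin> F"
      using endpoints_in_conn[of e F ends V] assms(3,4) by blast
    then show "spanning_tree V E ends (insert e F)"
      unfolding spanning_tree_def
      using assms(2) F(1) is_forest_insert_iff[OF F(2) \<open>e \<notin> F\<close>] across conn_iff_rtrancl
        is_connected_insert_if_two_components[OF F(3) assms(3,4) across] by blast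
  qed
qed

lemma conn_ne_iff_edge_across:
  assumes "card (components V ends F) = 2" "card (components V ends F') = 2"
    and "\<forall>e\<in>F'. fst (ends e) \<in> V \<and> snd (ends e) \<in> V"
  shows "conn V ends F \<noteq> conn V ends F' \<longleftrightarrow>
    (\<exists>e\<in>F'. (fst (ends e), snd (ends e)) \<notin> conn V ends F)"
proof
  assume "conn V ends F \<noteq> conn V ends F'"
  show "\<exists>e\<in>F'. (fst (ends e), snd (ends e)) \<notin> conn V ends F"
  proof (rule ccontr)
    assume "\<not> ?thesis"
    then have "conn V ends F' \<subseteq> conn V ends F"
      by (intro conn_subset_if_endpoints_conn) blast
    then have "conn V ends F' = conn V ends F"
      using assms(1,2) unfolding components_def
      by (intro equiv_eq_if_subset_card_quotient_eq[OF equiv_conn equiv_conn])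
        (simp_all add: card_ge_0_finite)
    with \<open>conn V ends F \<noteq> conn V ends F'\<close> show False
      by simp
  qed
next
  assume "\<exists>e\<in>F'. (fst (ends e), snd (ends e)) \<notin> conn V ends F"
  then obtain e where "e \<in> F'" "(fst (ends e), snd (ends e)) \<notin> conn V ends F"
    by blast
  moreover have "(fst (ends e), snd (ends e)) \<in> conn V ends F'"
    using endpoints_in_conn[of e F' ends V] \<open>e \<in> F'\<close> assms(3) by blast
  ultimately show "conn V ends F \<noteq> conn V ends F'"
    by metis
qed

theorem proposition2p2:
  fixes V :: "'v set" and E :: "'e set" and ends :: "'e \<Rightarrow> 'v \<times> 'v"
  assumes "multigraph V E ends"
    and "is_connected V ends E"
    and "spanning_2forest V E ends F"
    and "spanning_2forest V E ends F'"
  shows "\<not> vertex_equivalent V ends F F' \<longleftrightarrow>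
         (\<exists>e\<in>F'. spanning_tree V E ends (F \<union> {e}))"
proof -
  have "F' \<subseteq> E" and ends_in_V: "\<forall>e\<in>F'. fst (ends e) \<in> V \<and> snd (ends e) \<in> V"
    using assms(1,4) by (auto simp: multigraph_def spanning_2forest_def)
  have "\<not> vertex_equivalent V ends F F' \<longleftrightarrow> conn V ends F \<noteq> conn V ends F'"
    by (simp add: vertex_equivalent_def components_eq_iff_conn_eq)
  also have "\<dots> \<longleftrightarrow> (\<exists>e\<in>F'. (fst (ends e), snd (ends e)) \<notin> conn V ends F)"
    using assms(3,4) ends_in_V by (intro conn_ne_iff_edge_across) (simp_all add: spanning_2forest_def)
  also have "\<dots> \<longleftrightarrow> (\<exists>e\<in>F'. spanning_tree V E ends (F \<union> {e}))"
    using spanning_tree_insert_iff[OF assms(3)] \<open>F' \<subseteq> E\<close> ends_in_V by (intro bex_cong) auto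
  finally show ?thesis .
qed

end
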